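(* Let $\mathcal{A}$ be a Banach algebra such that $\mathcal{A}^*$ factors on the left, i.e. $\mathcal{A}^*=\{a'a: a'\in\mathcal{A}^*,a\in\mathcal{A}\}$. Then $a\cdot a''\in Z_1(\mathcal{A}^{**})$ for all $a\in\mathcal{A}$, $a''\in\mathcal{A}^{**}$ if and only if $\mathcal{A}$ is Arens regular.
   Context: For $a,b\in\mathcal{A}$, $a'\in\mathcal{A}^*$, $a'',b''\in\mathcal{A}^{**}$: $\langle a'a,b\rangle=\langle a',ab\rangle$, $\langle b''a',a\rangle=\langle b'',a'a\rangle$, and the first Arens product is $\langle a''\cdot b'',a'\rangle=\langle a'',b''a'\rangle$. The second Arens product is given by $\langle a\circ a',b\rangle=\langle a',ba\rangle$, $\langle a'\circ a'',a\rangle=\langle a'',a\circ a'\rangle$, $\langle a''\circ b'',a'\rangle=\langle b'',a'\circ a''\rangle$. $Z_1(\mathcal{A}^{**})=\{a''\in\mathcal{A}^{**}: b''\mapsto a''\cdot b''\text{ is weak}^*\text{-to-weak}^*\text{ continuous}\}$. $\mathcal{A}$ is Arens regular if the two Arens products coincide on $\mathcal{A}^{**}$ (equivalently $Z_1(\mathcal{A}^{**})=\mathcal{A}^{**}$). *)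

theory Defs
  imports "HOL-Analysis.Analysis"
begin

text \<open>Banach algebra A: type 'a :: {real_normed_algebra, banach} (associative, not necessarily
unital). Dual A* = 'a \<Rightarrow>L real, bidual A** = ('a \<Rightarrow>L real) \<Rightarrow>L real.\<close>

type_synonym 'a dual = "'a \<Rightarrow>\<^sub>L real"
type_synonym 'a bidual = "('a \<Rightarrow>\<^sub>L real) \<Rightarrow>\<^sub>L real"

definition dual_ract :: "'a::real_normed_algebra dual \<Rightarrow> 'a \<Rightarrow> 'a dual"
  where "dual_ract f a = Blinfun (\<lambda>b. f (a * b))"

definition bidual_lact :: "'a::real_normed_algebra bidual \<Rightarrow> 'a dual \<Rightarrow> 'a dual"
  where "bidual_lact G f = Blinfun (\<lambda>a. G (dual_ract f a))"

definition arens1 :: "'a::real_normed_algebra bidual \<Rightarrow> 'a bidual \<Rightarrow> 'a bidual"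
  where "arens1 F G = Blinfun (\<lambda>f. F (bidual_lact G f))"

definition dual_lact :: "'a::real_normed_algebra \<Rightarrow> 'a dual \<Rightarrow> 'a dual"
  where "dual_lact a f = Blinfun (\<lambda>b. f (b * a))"

definition bidual_ract :: "'a::real_normed_algebra dual \<Rightarrow> 'a bidual \<Rightarrow> 'a dual"
  where "bidual_ract f F = Blinfun (\<lambda>a. F (dual_lact a f))"

definition arens2 :: "'a::real_normed_algebra bidual \<Rightarrow> 'a bidual \<Rightarrow> 'a bidual"
  where "arens2 F G = Blinfun (\<lambda>f. G (bidual_ract f F))"

definition canon :: "'a::real_normed_vector \<Rightarrow> 'a bidual"
  where "canon a = Blinfun (\<lambda>f::'a \<Rightarrow>\<^sub>L real. blinfun_apply f a)"

definition weak_star :: "('b::real_normed_vector \<Rightarrow>\<^sub>L real) topology"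
  where "weak_star = pullback_topology UNIV blinfun_apply
                        (product_topology (\<lambda>_. euclidean) UNIV)"

definition Z1 :: "'a::real_normed_algebra bidual set"
  where "Z1 = {F. continuous_map weak_star weak_star (\<lambda>G. arens1 F G)}"

definition arens_regular :: "'a::real_normed_algebra itself \<Rightarrow> bool"
  where "arens_regular _ \<longleftrightarrow> (\<forall>F G :: 'a bidual. arens1 F G = arens2 F G)"

definition dual_factors_left :: "'a::real_normed_algebra itself \<Rightarrow> bool"
  where "dual_factors_left _ \<longleftrightarrow> (\<forall>h :: 'a dual. \<exists>f a. h = dual_ract f a)"

end

theory Submission
  imports Defs
begin

text \<open>An element F of the bidual lies in Z1 iff F\<cdot>G = F\<circ>G for all G: the functional
G \<mapsto> (F\<cdot>G)(h) is linear and weak*-continuous, hence evaluation at some \<phi> \<in> A*, and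
testing it on A \<subseteq> A** identifies \<phi> with h\<circ>F. If every h factors as h'a, then
(F\<cdot>G)(h'a) = ((a\<cdot>F)\<cdot>G)(h') and (F\<circ>G)(h'a) = ((a\<cdot>F)\<circ>G)(h'), so the two Arens products
agree as soon as all a\<cdot>F lie in Z1.\<close>

lemma bounded_linear_Blinfun_bilinear:
  assumes "bounded_bilinear h"
  shows "bounded_linear (\<lambda>x. Blinfun (h x))"
proof -
  have "(\<lambda>x y. blinfun_apply (Blinfun (h x)) y) = h"
    using bounded_bilinear.bounded_linear_right[OF assms] by (simp add: bounded_linear_Blinfun_apply)
  with assms show ?thesis
    using transfer_bounded_bilinear_bounded_linearI by metis
qed

lemma bounded_bilinear_linear_compose:
  assumes "bounded_linear g" "bounded_bilinear h"
  shows "bounded_bilinear (\<lambda>x y. g (h x y))"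
proof -
  have "bounded_linear (\<lambda>x. Blinfun g o\<^sub>L Blinfun (h x))"
    using bounded_linear_Blinfun_bilinear[OF assms(2)]
    by (intro bounded_linear_compose[OF bounded_bilinear.bounded_linear_right[OF bounded_bilinear_blinfun_compose]])
  moreover have "(\<lambda>x y. blinfun_apply (Blinfun g o\<^sub>L Blinfun (h x)) y) = (\<lambda>x y. g (h x y))"
    using assms bounded_bilinear.bounded_linear_right[OF assms(2)] by (simp add: bounded_linear_Blinfun_apply)
  ultimately show ?thesis
    using transfer_bounded_bilinear_bounded_linearI by metis
qed

lemma dual_ract_eq_compose: "dual_ract f a = f o\<^sub>L blinfun_mult_right a"
proof -
  have "(\<lambda>b. f (a * b)) = blinfun_apply (f o\<^sub>L blinfun_mult_right a)"
    by (simp add: fun_eq_iff)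
  then show ?thesis
    unfolding dual_ract_def by (simp add: blinfun_apply_inverse)
qed

lemma dual_lact_eq_compose: "dual_lact a f = f o\<^sub>L blinfun_mult_left a"
proof -
  have "(\<lambda>b. f (b * a)) = blinfun_apply (f o\<^sub>L blinfun_mult_left a)"
    by (simp add: fun_eq_iff)
  then show ?thesis
    unfolding dual_lact_def by (simp add: blinfun_apply_inverse)
qed

lemma bounded_bilinear_dual_ract: "bounded_bilinear dual_ract"
  unfolding dual_ract_eq_compose[abs_def]
  by (rule bounded_bilinear.comp[OF bounded_bilinear_blinfun_compose bounded_linear_ident bounded_linear_blinfun_mult_right])

lemma bounded_bilinear_dual_lact: "bounded_bilinear dual_lact"
  unfolding dual_lact_eq_compose[abs_def]
  by (rule bounded_bilinear.flip[OF bounded_bilinear.comp[OF bounded_bilinear_blinfun_compose bounded_linear_ident bounded_linear_blinfun_mult_left]])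

lemma dual_ract_apply [simp]: "dual_ract f a b = f (a * b)"
  by (simp add: dual_ract_eq_compose)

lemma dual_lact_apply [simp]: "dual_lact a f b = f (b * a)"
  by (simp add: dual_lact_eq_compose)

lemma bidual_lact_apply [simp]: "bidual_lact G f a = G (dual_ract f a)"
  unfolding bidual_lact_def
  by (simp add: bounded_linear_Blinfun_apply bounded_linear_compose[OF blinfun.bounded_linear_right bounded_bilinear.bounded_linear_right[OF bounded_bilinear_dual_ract]])

lemma bidual_ract_apply [simp]: "bidual_ract f F a = F (dual_lact a f)"
  unfolding bidual_ract_def
  by (simp add: bounded_linear_Blinfun_apply bounded_linear_compose[OF blinfun.bounded_linear_right bounded_bilinear.bounded_linear_left[OF bounded_bilinear_dual_lact]])

lemma arens1_apply [simp]: "arens1 F G f = F (bidual_lact G f)"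
proof -
  have "bounded_linear (\<lambda>f. bidual_lact G f)"
    unfolding bidual_lact_def
    by (intro bounded_linear_Blinfun_bilinear bounded_bilinear_linear_compose[OF blinfun.bounded_linear_right bounded_bilinear_dual_ract])
  then show ?thesis
    unfolding arens1_def by (simp add: bounded_linear_Blinfun_apply bounded_linear_compose[OF blinfun.bounded_linear_right])
qed

lemma arens2_apply [simp]: "arens2 F G f = G (bidual_ract f F)"
proof -
  have "bounded_linear (\<lambda>f. bidual_ract f F)"
    unfolding bidual_ract_def
    by (intro bounded_linear_Blinfun_bilinear bounded_bilinear_linear_compose[OF blinfun.bounded_linear_right bounded_bilinear.flip[OF bounded_bilinear_dual_lact]])
  then show ?thesis
    unfolding arens2_def by (simp add: bounded_linear_Blinfun_apply bounded_linear_compose[OF blinfun.bounded_linear_right])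
qed

lemma canon_apply [simp]: "canon a f = f a"
  unfolding canon_def by (simp add: bounded_linear_Blinfun_apply)

lemma linear_functional_eq_sum_if_kernels:
  fixes g :: "'v::real_vector \<Rightarrow> real" and f :: "'i \<Rightarrow> 'v \<Rightarrow> real"
  assumes "finite I" "linear g" "\<And>i. i \<in> I \<Longrightarrow> linear (f i)"
    and "\<And>x. (\<forall>i\<in>I. f i x = 0) \<Longrightarrow> g x = 0"
  shows "\<exists>c. \<forall>x. g x = (\<Sum>i\<in>I. c i * f i x)"
  using assms
proof (induction I arbitrary: g rule: finite_induct)
  case empty
  then show ?case by auto
next
  case (insert j I)
  have sum_upd: "(\<Sum>i\<in>insert j I. (c(j := k)) i * f i x) = k * f j x + (\<Sum>i\<in>I. c i * f i x)"
    for c k x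
    using insert.hyps by (simp add: sum.insert) (intro sum.cong; auto)
  show ?case
  proof (cases "\<exists>x0. (\<forall>i\<in>I. f i x0 = 0) \<and> f j x0 \<noteq> 0")
    case False
    then obtain c where c: "\<forall>x. g x = (\<Sum>i\<in>I. c i * f i x)"
      using insert.IH insert.prems by force
    then have "\<forall>x. g x = (\<Sum>i\<in>insert j I. (c(j := 0)) i * f i x)"
      using sum_upd[of c 0] by simp
    then show ?thesis by blast
  next
    case True
    then obtain x0 where x0: "\<forall>i\<in>I. f i x0 = 0" "f j x0 \<noteq> 0" by blast
    define k where "k = g x0 / f j x0"
    have lin_j: "linear (f j)" using insert.prems by simp
    have "linear (\<lambda>x. g x - k * f j x)"
      using insert.prems(1) lin_j by (simp add: linear_iff algebra_simps)
    moreover have "g x - k * f j x = 0" if "\<forall>i\<in>I. f i x = 0" for x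
    proof -
      \<comment> \<open>Project x along x0 into the common kernel of all f i, i \<in> insert j I.\<close>
      define y where "y = x - (f j x / f j x0) *\<^sub>R x0"
      have "f i y = 0" if "i \<in> insert j I" for i
        using that insert.prems(2) \<open>\<forall>i\<in>I. f i x = 0\<close> x0
        by (auto simp: y_def linear_diff linear_scale)
      then have "g y = 0" using insert.prems(3) by blast
      then show ?thesis
        using insert.prems(1) by (simp add: y_def linear_diff linear_scale k_def)
    qed
    ultimately obtain c where c: "\<forall>x. g x - k * f j x = (\<Sum>i\<in>I. c i * f i x)"
      using insert.IH insert.prems by force
    then have "\<forall>x. g x = (\<Sum>i\<in>insert j I. (c(j := k)) i * f i x)"
      by (simp only: sum_upd) (metis add.commute diff_add_cancel)
    then show ?thesis by blast
  qed
qed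

lemma topspace_weak_star [simp]: "topspace weak_star = UNIV"
  unfolding weak_star_def by (simp add: topspace_pullback_topology)

lemma continuous_map_weak_star_eval: "continuous_map weak_star euclidean (\<lambda>G. G f)"
proof -
  have "continuous_map weak_star euclidean ((\<lambda>p. p f) \<circ> blinfun_apply)"
    unfolding weak_star_def
    by (intro continuous_map_pullback continuous_map_product_projection) simp
  then show ?thesis by (simp add: o_def)
qed

lemma continuous_map_weak_star_iff:
  "continuous_map X weak_star \<phi> \<longleftrightarrow> (\<forall>f. continuous_map X euclidean (\<lambda>x. \<phi> x f))"
proof
  assume "continuous_map X weak_star \<phi>"
  then show "\<forall>f. continuous_map X euclidean (\<lambda>x. \<phi> x f)"
    using continuous_map_compose[OF _ continuous_map_weak_star_eval] by (auto simp: o_def)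
next
  assume "\<forall>f. continuous_map X euclidean (\<lambda>x. \<phi> x f)"
  then show "continuous_map X weak_star \<phi>"
    unfolding weak_star_def
    by (intro continuous_map_pullback') (auto simp: continuous_map_componentwise_UNIV o_def)
qed

lemma weak_star_continuous_linear_kernel:
  fixes L :: "('b::real_normed_vector \<Rightarrow>\<^sub>L real) \<Rightarrow> real"
  assumes cont: "continuous_map weak_star euclidean L" and lin: "linear L"
  obtains I where "finite I" "\<And>G. (\<forall>f\<in>I. blinfun_apply G f = 0) \<Longrightarrow> L G = 0"
proof -
  have "openin weak_star {G. L G \<in> {-1<..<1}}"
    using openin_continuous_map_preimage[OF cont, of "{-1<..<1}"] by simp
  then obtain U where U: "openin (product_topology (\<lambda>_. euclidean) UNIV) U"
      and L_U: "{G. L G \<in> {-1<..<1}} = blinfun_apply -` U"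
    unfolding weak_star_def openin_pullback_topology by auto
  have "blinfun_apply 0 \<in> U"
    using L_U linear_0[OF lin] by auto
  then obtain V where V: "finite {f. V f \<noteq> UNIV}" "blinfun_apply 0 \<in> Pi\<^sub>E UNIV V"
      "Pi\<^sub>E UNIV V \<subseteq> U"
    using U unfolding openin_product_topology_alt by force
  show thesis
  proof (rule that[OF V(1)])
    fix G :: "'b \<Rightarrow>\<^sub>L real"
    assume G: "\<forall>f\<in>{f. V f \<noteq> UNIV}. G f = 0"
    \<comment> \<open>The whole line through G lies in the basic neighbourhood, so L is bounded on it.\<close>
    have "blinfun_apply (t *\<^sub>R G) f \<in> V f" for t f
      using G V(2) by (cases "V f = UNIV") (simp_all add: PiE_iff scaleR_blinfun.rep_eq)
    then have "blinfun_apply (t *\<^sub>R G) \<in> Pi\<^sub>E UNIV V" for t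
      by (simp add: PiE_iff)
    then have "L (t *\<^sub>R G) \<in> {-1<..<1}" for t
      using V(3) L_U by blast
    then have "\<bar>t * L G\<bar> < 1" for t
      by (simp add: linear_scale[OF lin] abs_less_iff)
    from this[of "2 / L G"] show "L G = 0"
      by (cases "L G = 0") auto
  qed
qed

lemma weak_star_continuous_linear_eq_eval:
  fixes L :: "('b::real_normed_vector \<Rightarrow>\<^sub>L real) \<Rightarrow> real"
  assumes "continuous_map weak_star euclidean L" "linear L"
  obtains \<phi> where "\<And>G. L G = blinfun_apply G \<phi>"
proof -
  obtain I where I: "finite I" "\<And>G. (\<forall>f\<in>I. blinfun_apply G f = 0) \<Longrightarrow> L G = 0"
    using weak_star_continuous_linear_kernel[OF assms] by blast
  have "linear (\<lambda>G. blinfun_apply G f)" for f :: 'b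
    by (simp add: bounded_linear.linear)
  then obtain c where "\<forall>G. L G = (\<Sum>f\<in>I. c f * G f)"
    using linear_functional_eq_sum_if_kernels[OF I(1) assms(2), of "\<lambda>f G. G f"] I(2) by blast
  then have "L G = G (\<Sum>f\<in>I. c f *\<^sub>R f)" for G
    by (simp add: blinfun.sum_right blinfun.scaleR_right)
  then show thesis by (rule that)
qed

lemma bidual_lact_canon: "bidual_lact (canon b) f = dual_lact b f"
  by (rule blinfun_eqI) simp

lemma linear_bidual_lact: "linear (\<lambda>G. bidual_lact G f)"
  by (auto simp: linear_iff plus_blinfun.rep_eq scaleR_blinfun.rep_eq intro!: blinfun_eqI)

lemma continuous_map_arens2_right: "continuous_map weak_star weak_star (arens2 F)"
  by (simp add: continuous_map_weak_star_iff continuous_map_weak_star_eval)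

lemma Z1_iff_arens1_eq_arens2: "F \<in> Z1 \<longleftrightarrow> (\<forall>G. arens1 F G = arens2 F G)"
proof
  assume "F \<in> Z1"
  show "\<forall>G. arens1 F G = arens2 F G"
  proof (intro allI blinfun_eqI)
    fix G :: "'a bidual" and h :: "'a dual"
    have "continuous_map weak_star euclidean (\<lambda>G. arens1 F G h)"
      using \<open>F \<in> Z1\<close> unfolding Z1_def continuous_map_weak_star_iff by blast
    moreover have "linear (\<lambda>G. arens1 F G h)"
      using linear_compose[OF linear_bidual_lact bounded_linear.linear[OF blinfun.bounded_linear_right]]
      by (simp add: o_def)
    ultimately obtain \<phi> where \<phi>: "\<And>G. arens1 F G h = G \<phi>"
      using weak_star_continuous_linear_eq_eval by blast
    have "\<phi> = bidual_ract h F"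
      using \<phi>[of "canon b" for b] by (intro blinfun_eqI) (simp add: bidual_lact_canon)
    then show "arens1 F G h = arens2 F G h"
      by (metis \<phi> arens2_apply)
  qed
next
  assume "\<forall>G. arens1 F G = arens2 F G"
  then show "F \<in> Z1"
    using continuous_map_arens2_right by (simp add: Z1_def fun_eq_iff[symmetric])
qed

lemma bidual_lact_dual_ract: "bidual_lact G (dual_ract h a) = dual_ract (bidual_lact G h) a"
proof -
  have "dual_ract (dual_ract h a) b = dual_ract h (a * b)" for b
    by (rule blinfun_eqI) (simp add: mult.assoc)
  then show ?thesis by (intro blinfun_eqI) simp
qed

lemma bidual_ract_arens1_canon: "bidual_ract h (arens1 (canon a) F) = bidual_ract (dual_ract h a) F"
proof -
  have "dual_ract (dual_lact b h) a = dual_lact b (dual_ract h a)" for b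
    by (rule blinfun_eqI) (simp add: mult.assoc)
  then show ?thesis by (intro blinfun_eqI) simp
qed

theorem corollary2p3:
  assumes "dual_factors_left TYPE('a::{real_normed_algebra, banach})"
  shows "(\<forall>(a::'a) (F::'a bidual). arens1 (canon a) F \<in> Z1) \<longleftrightarrow> arens_regular TYPE('a)"
proof
  assume module_in_Z1: "\<forall>(a::'a) (F::'a bidual). arens1 (canon a) F \<in> Z1"
  show "arens_regular TYPE('a)"
    unfolding arens_regular_def
  proof (intro allI blinfun_eqI)
    fix F G :: "'a bidual" and h :: "'a dual"
    obtain h' a where h: "h = dual_ract h' a"
      using assms unfolding dual_factors_left_def by blast
    have "arens1 F G h = arens1 (arens1 (canon a) F) G h'"
      by (simp add: h bidual_lact_dual_ract)
    also have "\<dots> = arens2 (arens1 (canon a) F) G h'"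
      using module_in_Z1 Z1_iff_arens1_eq_arens2 by metis
    also have "\<dots> = arens2 F G h"
      by (simp add: h bidual_ract_arens1_canon)
    finally show "arens1 F G h = arens2 F G h" .
  qed
next
  assume "arens_regular TYPE('a)"
  then show "\<forall>(a::'a) (F::'a bidual). arens1 (canon a) F \<in> Z1"
    by (simp add: arens_regular_def Z1_iff_arens1_eq_arens2)
qed

end
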